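(* If $f:\mathbb R^n\to\overline{\mathbb R}$ is a-strongly convex, then $f$ is essentially strictly convex.
   Context: Standing assumption: $\phi:\mathbb R^n\to\mathbb R$ is convex, finite-valued, differentiable and strictly convex (Legendre with full domain), super-coercive; $\phi^*$ has the same properties and $\nabla\phi^*=(\nabla\phi)^{-1}$. $\partial f$ is the limiting subdifferential. A proper lsc $f$ is a-strongly convex if for every $(\bar x,\bar v)\in\operatorname{graph}\partial f$: $f(x)\ge f(\bar x)+\phi(x-\bar x+\nabla\phi^*(\bar v))-\phi(\nabla\phi^*(\bar v))$ for all $x$. A proper lsc convex $f$ is essentially strictly convex if it is strictly convex on every convex subset of $\operatorname{dom}\partial f$. *)

theory Defs
  imports "HOL-Analysis.Analysis" "HOL-Library.Extended_Real"
begin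

definition strictly_convex_real :: "('a::real_vector \<Rightarrow> real) \<Rightarrow> bool" where
  "strictly_convex_real g \<longleftrightarrow>
     (\<forall>x y t. x \<noteq> y \<and> 0 < t \<and> t < 1 \<longrightarrow>
        g ((1 - t) *\<^sub>R x + t *\<^sub>R y) < (1 - t) * g x + t * g y)"

definition super_coercive :: "('a::real_normed_vector \<Rightarrow> real) \<Rightarrow> bool" where
  "super_coercive g \<longleftrightarrow> filterlim (\<lambda>x. g x / norm x) at_top at_infinity"

definition legendre_full :: "('a::euclidean_space \<Rightarrow> real) \<Rightarrow> ('a \<Rightarrow> 'a) \<Rightarrow> bool" where
  "legendre_full g dg \<longleftrightarrow>
     convex_on UNIV g \<and>
     (\<forall>x. (g has_derivative (\<lambda>h. dg x \<bullet> h)) (at x)) \<and>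
     strictly_convex_real g \<and> super_coercive g"

definition fconj :: "('a::real_inner \<Rightarrow> real) \<Rightarrow> 'a \<Rightarrow> ereal" where
  "fconj g v = (SUP x. ereal (v \<bullet> x - g x))"

definition kernel_ok :: "('a::euclidean_space \<Rightarrow> real) \<Rightarrow> ('a \<Rightarrow> 'a) \<Rightarrow>
    ('a \<Rightarrow> real) \<Rightarrow> ('a \<Rightarrow> 'a) \<Rightarrow> bool" where
  "kernel_ok phi dphi phis dphis \<longleftrightarrow>
     legendre_full phi dphi \<and> legendre_full phis dphis \<and>
     (\<forall>v. fconj phi v = ereal (phis v)) \<and>
     (\<forall>x. dphis (dphi x) = x) \<and> (\<forall>v. dphi (dphis v) = v)"

definition proper_fun :: "('a \<Rightarrow> ereal) \<Rightarrow> bool" where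
  "proper_fun f \<longleftrightarrow> (\<forall>x. f x \<noteq> -\<infinity>) \<and> (\<exists>x. f x \<noteq> \<infinity>)"

definition lsc_fun :: "('a::topological_space \<Rightarrow> ereal) \<Rightarrow> bool" where
  "lsc_fun f \<longleftrightarrow> (\<forall>x X. X \<longlonglongrightarrow> x \<longrightarrow> f x \<le> liminf (\<lambda>k. f (X k)))"

definition convex_fun :: "('a::real_vector \<Rightarrow> ereal) \<Rightarrow> bool" where
  "convex_fun f \<longleftrightarrow>
     (\<forall>x y t. 0 \<le> t \<and> t \<le> 1 \<longrightarrow>
        f ((1 - t) *\<^sub>R x + t *\<^sub>R y) \<le> ereal (1 - t) * f x + ereal t * f y)"

definition strictly_convex_fun_on :: "'a::real_vector set \<Rightarrow> ('a \<Rightarrow> ereal) \<Rightarrow> bool" where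
  "strictly_convex_fun_on C f \<longleftrightarrow>
     (\<forall>x\<in>C. \<forall>y\<in>C. \<forall>t. x \<noteq> y \<and> 0 < t \<and> t < 1 \<longrightarrow>
        f ((1 - t) *\<^sub>R x + t *\<^sub>R y) < ereal (1 - t) * f x + ereal t * f y)"

definition regular_subdiff :: "('a::real_inner \<Rightarrow> ereal) \<Rightarrow> 'a \<Rightarrow> 'a set" where
  "regular_subdiff f x = {v. \<exists>r. f x = ereal r \<and>
     (\<forall>\<epsilon>>0. \<exists>\<delta>>0. \<forall>y. dist y x < \<delta> \<longrightarrow>
        ereal (r + v \<bullet> (y - x) - \<epsilon> * norm (y - x)) \<le> f y)}"

definition limiting_subdiff :: "('a::real_inner \<Rightarrow> ereal) \<Rightarrow> 'a \<Rightarrow> 'a set" where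
  "limiting_subdiff f x = {v. \<exists>X V. X \<longlonglongrightarrow> x \<and> (\<lambda>k. f (X k)) \<longlonglongrightarrow> f x \<and>
     V \<longlonglongrightarrow> v \<and> (\<forall>k. V k \<in> regular_subdiff f (X k))}"

definition dom_subdiff :: "('a::real_inner \<Rightarrow> ereal) \<Rightarrow> 'a set" where
  "dom_subdiff f = {x. limiting_subdiff f x \<noteq> {}}"

definition a_strongly_convex :: "('a::euclidean_space \<Rightarrow> real) \<Rightarrow> ('a \<Rightarrow> 'a) \<Rightarrow>
    ('a \<Rightarrow> ereal) \<Rightarrow> bool" where
  "a_strongly_convex phi dphis f \<longleftrightarrow>
     proper_fun f \<and> lsc_fun f \<and>
     (\<forall>xb vb. vb \<in> limiting_subdiff f xb \<longrightarrow>
        (\<forall>x. f x \<ge> f xb + ereal (phi (x - xb + dphis vb) - phi (dphis vb))))"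

definition essentially_strictly_convex :: "('a::euclidean_space \<Rightarrow> ereal) \<Rightarrow> bool" where
  "essentially_strictly_convex f \<longleftrightarrow>
     proper_fun f \<and> lsc_fun f \<and> convex_fun f \<and>
     (\<forall>C. convex C \<and> C \<subseteq> dom_subdiff f \<longrightarrow> strictly_convex_fun_on C f)"

end

theory Submission
  imports Defs
begin

text \<open>Since \<open>\<phi>\<close> is convex and \<open>\<nabla>\<phi>(\<nabla>\<phi>\<^sup>*(v)) = v\<close>, the tangent inequality for \<open>\<phi>\<close>
  at \<open>\<nabla>\<phi>\<^sup>*(v)\<close> turns a-strong convexity into the subgradient inequality
  \<open>f(y) + \<langle>v, x - y\<rangle> \<le> f(x)\<close> for every limiting subgradient \<open>v \<in> \<partial>f(y)\<close>.
  This inequality already forces convexity: to bound \<open>f\<close> at \<open>z = (1-t)x\<^sub>0 + t x\<^sub>1\<close>, take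
  minimisers \<open>y\<^sub>n\<close> of \<open>f + \<kappa>\<^sub>n |\<cdot> - z|\<^sup>2\<close> over a ball around \<open>z\<close>. For large \<open>\<kappa>\<^sub>n\<close> they are
  interior, so \<open>-2\<kappa>\<^sub>n(y\<^sub>n - z)\<close> is a regular subgradient at \<open>y\<^sub>n\<close>; averaging the subgradient
  inequalities at \<open>x\<^sub>0\<close> and \<open>x\<^sub>1\<close> gives \<open>f(y\<^sub>n) + 2\<kappa>\<^sub>n|y\<^sub>n - z|\<^sup>2 \<le> (1-t)f(x\<^sub>0) + t f(x\<^sub>1)\<close>,
  hence \<open>y\<^sub>n \<rightarrow> z\<close>, and lower semicontinuity bounds \<open>f(z)\<close>.
  Strictness on convex subsets of \<open>dom \<partial>f\<close> comes from applying a-strong convexity at the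
  intermediate point \<open>z\<close> and using strict convexity of \<open>\<phi>\<close>.\<close>

lemma convex_on_UNIV_above_tangent:
  fixes g :: "'a::euclidean_space \<Rightarrow> real"
  assumes cv: "convex_on UNIV g" and dg: "(g has_derivative (\<lambda>h. d \<bullet> h)) (at w)"
  shows "g w + d \<bullet> h \<le> g (w + h)"
proof -
  define p where "p s = g (w + s *\<^sub>R h)" for s :: real
  have cp: "convex_on UNIV p"
    unfolding p_def
  proof (rule convex_onI)
    fix t :: real and x y :: real assume "0 < t" "t < 1"
    have "w + ((1 - t) * x + t * y) *\<^sub>R h = (1 - t) *\<^sub>R (w + x *\<^sub>R h) + t *\<^sub>R (w + y *\<^sub>R h)"
      by (simp add: algebra_simps)
    then show "g (w + ((1 - t) *\<^sub>R x + t *\<^sub>R y) *\<^sub>R h) \<le> (1 - t) * g (w + x *\<^sub>R h) + t * g (w + y *\<^sub>R h)"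
      using convex_onD[OF cv, of t] \<open>0 < t\<close> \<open>t < 1\<close> by simp
  qed simp
  have line: "((\<lambda>s. w + s *\<^sub>R h) has_derivative (\<lambda>s. s *\<^sub>R h)) (at (0::real))"
    by (auto intro!: derivative_eq_intros)
  have "((\<lambda>s. g (w + s *\<^sub>R h)) has_derivative (\<lambda>s. d \<bullet> (s *\<^sub>R h))) (at (0::real))"
    using has_derivative_compose[OF line, of g "\<lambda>h. d \<bullet> h"] dg by (simp add: o_def)
  moreover have "(\<lambda>s. d \<bullet> (s *\<^sub>R h)) = (*) (d \<bullet> h)" by (auto simp: fun_eq_iff)
  ultimately have "(p has_field_derivative (d \<bullet> h)) (at 0)"
    unfolding p_def has_field_derivative_def by simp
  with convex_on_imp_above_tangent[OF cp, of 0 1 "d \<bullet> h"] have "d \<bullet> h \<le> p 1 - p 0" by simp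
  then show ?thesis by (simp add: p_def)
qed

lemma lsc_fun_plus_continuous_attains_min:
  fixes f :: "'a::euclidean_space \<Rightarrow> ereal" and c :: "'a \<Rightarrow> real"
  assumes lsc: "lsc_fun f" and K: "compact K" "K \<noteq> {}" and cc: "continuous_on K c"
  shows "\<exists>y\<in>K. \<forall>x\<in>K. f y + ereal (c y) \<le> f x + ereal (c x)"
proof -
  define g where "g x = f x + ereal (c x)" for x
  define I where "I = Inf (g ` K)"
  obtain u where u: "\<forall>n. u n \<in> g ` K" "u \<longlonglongrightarrow> I"
    using Inf_as_limit[of "g ` K"] K(2) unfolding I_def by auto
  have "\<forall>n. \<exists>x\<in>K. u n = g x" using u(1) by blast
  then obtain X where X: "\<And>n. X n \<in> K" "\<And>n. u n = g (X n)" by metis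
  obtain l r where lr: "l \<in> K" "strict_mono r" "(X \<circ> r) \<longlonglongrightarrow> l"
    using compact_imp_seq_compact[OF K(1)] X(1) unfolding seq_compact_def by metis
  have gr: "(\<lambda>n. g (X (r n))) \<longlonglongrightarrow> I"
    using LIMSEQ_subseq_LIMSEQ[OF u(2) lr(2)] X(2) by (simp add: o_def)
  have "(\<lambda>n. c (X (r n))) \<longlonglongrightarrow> c l"
    using continuous_on_tendsto_compose[OF cc lr(3) lr(1)] X(1) by (simp add: o_def)
  then have cl: "(\<lambda>n. - ereal (c (X (r n)))) \<longlonglongrightarrow> - ereal (c l)"
    by (intro tendsto_uminus_ereal tendsto_ereal)
  have fl: "f l \<le> liminf (\<lambda>n. f (X (r n)))"
    using lsc lr(3) unfolding lsc_fun_def by (simp add: o_def)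
  have eq: "f (X (r n)) = - ereal (c (X (r n))) + g (X (r n))" for n
    unfolding g_def by (cases "f (X (r n))") auto
  have "liminf (\<lambda>n. f (X (r n))) = - ereal (c l) + liminf (\<lambda>n. g (X (r n)))"
    unfolding eq by (rule ereal_liminf_lim_add[OF cl]) simp
  also have "liminf (\<lambda>n. g (X (r n))) = I"
    using gr lim_imp_Liminf by force
  finally have "f l \<le> - ereal (c l) + I" using fl by simp
  then have "g l \<le> I"
    unfolding g_def by (cases "f l"; cases I) auto
  moreover have "\<forall>x\<in>K. I \<le> g x" unfolding I_def by (simp add: INF_lower)
  ultimately show ?thesis using lr(1) unfolding g_def by force
qed

lemma proper_lsc_fun_bounded_below_on_compact:
  fixes f :: "'a::euclidean_space \<Rightarrow> ereal"
  assumes proper: "proper_fun f" and lsc: "lsc_fun f" and K: "compact K"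
  shows "\<exists>m. \<forall>x\<in>K. ereal m \<le> f x"
proof (cases "K = {}")
  case False
  then obtain y where "\<forall>x\<in>K. f y \<le> f x" and "f y \<noteq> -\<infinity>"
    using lsc_fun_plus_continuous_attains_min[OF lsc K, of "\<lambda>x. 0"] proper
    unfolding proper_fun_def by auto
  then show ?thesis by (cases "f y") (auto intro: order_trans)
qed simp

lemma tendsto_of_weighted_norm_sq_bounded:
  fixes y :: "nat \<Rightarrow> 'a::real_normed_vector"
  assumes bound: "\<And>n. \<kappa> n * norm (y n - z)^2 \<le> B" and pos: "\<And>n. 0 < \<kappa> n"
    and lim: "filterlim \<kappa> at_top sequentially"
  shows "y \<longlonglongrightarrow> z"
proof (rule LIM_zero_cancel)
  have "(\<lambda>n. B / \<kappa> n) \<longlonglongrightarrow> 0"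
    by (rule tendsto_divide_0[OF tendsto_const filterlim_at_top_imp_at_infinity[OF lim]])
  from tendsto_real_sqrt[OF this] have sq: "(\<lambda>n. sqrt (B / \<kappa> n)) \<longlonglongrightarrow> 0" by simp
  have "norm (y n - z) \<le> sqrt (B / \<kappa> n)" for n
  proof -
    have "norm (y n - z)^2 * \<kappa> n \<le> B" using bound[of n] by (simp add: mult.commute)
    then have "norm (y n - z)^2 \<le> B / \<kappa> n" using pos[of n] by (simp add: pos_le_divide_eq)
    then show ?thesis by (simp add: real_le_rsqrt)
  qed
  then show "(\<lambda>n. y n - z) \<longlonglongrightarrow> 0"
    by (intro Lim_null_comparison[OF always_eventually sq]) blast
qed

lemma regular_subdiff_subset_limiting_subdiff: "regular_subdiff f x \<subseteq> limiting_subdiff f x"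
  unfolding limiting_subdiff_def
  by (auto intro!: exI[of _ "\<lambda>k. x"] exI[of _ "\<lambda>k. v" for v])

lemma proximal_minimizer_regular_subdiff:
  fixes f :: "'a::euclidean_space \<Rightarrow> ereal"
  assumes yR: "dist y z < R" and kp: "\<kappa> > 0"
    and mn: "\<forall>x\<in>cball z R. f y + ereal (\<kappa> * norm (y - z)^2) \<le> f x + ereal (\<kappa> * norm (x - z)^2)"
    and fy: "f y = ereal r"
  shows "- (2 * \<kappa>) *\<^sub>R (y - z) \<in> regular_subdiff f y"
  unfolding regular_subdiff_def
proof (rule CollectI, rule exI[of _ r], intro conjI allI impI fy)
  fix \<epsilon> :: real assume ep: "\<epsilon> > 0"
  define \<delta> where "\<delta> = min (R - dist y z) (\<epsilon> / \<kappa>)"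
  have dp: "\<delta> > 0" using yR ep kp unfolding \<delta>_def by auto
  show "\<exists>\<delta>>0. \<forall>x. dist x y < \<delta> \<longrightarrow>
          ereal (r + (- (2 * \<kappa>) *\<^sub>R (y - z)) \<bullet> (x - y) - \<epsilon> * norm (x - y)) \<le> f x"
  proof (intro exI[of _ \<delta>] conjI allI impI dp)
    fix x assume xd: "dist x y < \<delta>"
    have "dist z x \<le> dist z y + dist y x" by (rule dist_triangle)
    then have "x \<in> cball z R" using xd unfolding \<delta>_def by (auto simp: dist_commute)
    then have ine: "f y + ereal (\<kappa> * norm (y - z)^2) \<le> f x + ereal (\<kappa> * norm (x - z)^2)"
      using mn by blast
    show "ereal (r + (- (2 * \<kappa>) *\<^sub>R (y - z)) \<bullet> (x - y) - \<epsilon> * norm (x - y)) \<le> f x"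
    proof (cases "f x")
      case (real s)
      have A: "r + \<kappa> * norm (y - z)^2 \<le> s + \<kappa> * norm (x - z)^2" using ine fy real by simp
      have B: "norm (x - z)^2 = norm (y - z)^2 + 2 * ((y - z) \<bullet> (x - y)) + norm (x - y)^2"
        unfolding power2_norm_eq_inner
        by (simp add: inner_diff_left inner_diff_right inner_commute algebra_simps)
      have "\<kappa> * norm (x - y) \<le> \<epsilon>"
        using xd kp unfolding \<delta>_def by (simp add: dist_norm field_simps)
      then have C: "\<kappa> * norm (x - y)^2 \<le> \<epsilon> * norm (x - y)"
        by (simp add: power2_eq_square mult.assoc[symmetric] mult_right_mono)
      have "r + (- (2 * \<kappa>) *\<^sub>R (y - z)) \<bullet> (x - y) - \<epsilon> * norm (x - y) \<le> s"
        using A B C by (simp add: algebra_simps)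
      then show ?thesis using real by simp
    qed (use ine fy in auto)
  qed
qed

lemma proximal_minimizer_interior:
  fixes f :: "'a::real_normed_vector \<Rightarrow> ereal"
  assumes yK: "y \<in> cball z R"
    and mn: "\<forall>x\<in>cball z R. f y + ereal (\<kappa> * norm (y - z)^2) \<le> f x + ereal (\<kappa> * norm (x - z)^2)"
    and lower: "\<forall>x\<in>cball z R. ereal m \<le> f x"
    and x0: "dist x0 z \<le> R - 1" and f0: "f x0 = ereal a0" and kp: "0 < \<kappa>" "a0 - m < \<kappa>"
  shows "dist y z < R"
proof (rule ccontr)
  assume "\<not> dist y z < R"
  then have yR: "norm (y - z) = R" using yK by (simp add: dist_norm norm_minus_commute)
  have R1: "1 \<le> R" using x0 zero_le_dist[of x0 z] by linarith
  have x0K: "x0 \<in> cball z R" using x0 by (simp add: dist_commute)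
  have "ereal m \<le> f y" using lower yK by blast
  then have "ereal (m + \<kappa> * R^2) \<le> f y + ereal (\<kappa> * norm (y - z)^2)"
    using yR by (cases "f y") auto
  also have "\<dots> \<le> ereal (a0 + \<kappa> * norm (x0 - z)^2)" using mn x0K f0 by fastforce
  finally have "m + \<kappa> * R^2 \<le> a0 + \<kappa> * norm (x0 - z)^2" by simp
  moreover have "\<kappa> * norm (x0 - z)^2 \<le> \<kappa> * (R - 1)^2"
    using x0 kp by (intro mult_left_mono power_mono) (auto simp: dist_norm)
  ultimately have "\<kappa> * (2 * R - 1) \<le> a0 - m" by (simp add: power2_eq_square algebra_simps)
  moreover have "\<kappa> * 1 \<le> \<kappa> * (2 * R - 1)" using kp R1 by (intro mult_left_mono) auto
  ultimately show False using kp by simp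
qed

lemma subgradient_inequality_average:
  assumes subgrad: "\<And>x. f y + ereal (v \<bullet> (x - y)) \<le> f x"
    and fy: "f y = ereal r" and f0: "f x0 = ereal a0" and f1: "f x1 = ereal a1"
    and t: "0 \<le> t" "t \<le> 1"
  shows "r + v \<bullet> ((1 - t) *\<^sub>R x0 + t *\<^sub>R x1 - y) \<le> (1 - t) * a0 + t * a1"
proof -
  have "r + v \<bullet> (x0 - y) \<le> a0" "r + v \<bullet> (x1 - y) \<le> a1"
    using subgrad[of x0] subgrad[of x1] fy f0 f1 by simp_all
  then have "(1 - t) * (r + v \<bullet> (x0 - y)) + t * (r + v \<bullet> (x1 - y)) \<le> (1 - t) * a0 + t * a1"
    using t by (intro add_mono mult_left_mono) auto
  then show ?thesis by (simp add: inner_diff_right inner_add_right algebra_simps)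
qed

lemma subgradient_inequality_imp_finite:
  assumes "proper_fun f"
    and subgrad: "\<And>x. f y + ereal (v \<bullet> (x - y)) \<le> f x"
  shows "\<exists>r. f y = ereal r"
proof -
  obtain x0 where "f x0 \<noteq> \<infinity>" and "f y \<noteq> -\<infinity>"
    using \<open>proper_fun f\<close> unfolding proper_fun_def by auto
  moreover have "f y = \<infinity> \<Longrightarrow> f x0 = \<infinity>" using subgrad[of x0] by simp
  ultimately show ?thesis by (cases "f y") auto
qed

lemma proximal_minimizer_bound:
  fixes f :: "'a::euclidean_space \<Rightarrow> ereal"
  assumes subgrad: "\<And>y v x. v \<in> limiting_subdiff f y \<Longrightarrow> f y + ereal (v \<bullet> (x - y)) \<le> f x"
    and mn: "\<forall>x\<in>cball z R. f y + ereal (\<kappa> * norm (y - z)^2) \<le> f x + ereal (\<kappa> * norm (x - z)^2)"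
    and yR: "dist y z < R" and kp: "0 < \<kappa>" and fy: "f y = ereal r"
    and f0: "f x0 = ereal a0" and f1: "f x1 = ereal a1" and t: "0 \<le> t" "t \<le> 1"
    and z: "z = (1 - t) *\<^sub>R x0 + t *\<^sub>R x1"
  shows "r + 2 * \<kappa> * norm (y - z)^2 \<le> (1 - t) * a0 + t * a1"
proof -
  define v where "v = - (2 * \<kappa>) *\<^sub>R (y - z)"
  have "v \<in> limiting_subdiff f y"
    using proximal_minimizer_regular_subdiff[OF yR kp mn fy] regular_subdiff_subset_limiting_subdiff
    unfolding v_def by blast
  from subgradient_inequality_average[OF subgrad[OF this] fy f0 f1 t]
  have "r + v \<bullet> (z - y) \<le> (1 - t) * a0 + t * a1" by (simp add: z)
  moreover have "v \<bullet> (z - y) = 2 * \<kappa> * norm (y - z)^2"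
    unfolding v_def power2_norm_eq_inner
    by (simp add: inner_diff_left inner_diff_right inner_commute algebra_simps)
  ultimately show ?thesis by simp
qed

lemma convex_combination_le_of_subgradient_inequality:
  fixes f :: "'a::euclidean_space \<Rightarrow> ereal"
  assumes proper: "proper_fun f" and lsc: "lsc_fun f"
    and subgrad: "\<And>y v x. v \<in> limiting_subdiff f y \<Longrightarrow> f y + ereal (v \<bullet> (x - y)) \<le> f x"
    and f0: "f x0 = ereal a0" and f1: "f x1 = ereal a1" and t: "0 \<le> t" "t \<le> 1"
  shows "f ((1 - t) *\<^sub>R x0 + t *\<^sub>R x1) \<le> ereal ((1 - t) * a0 + t * a1)"
proof -
  define z where "z = (1 - t) *\<^sub>R x0 + t *\<^sub>R x1"
  define C where "C = (1 - t) * a0 + t * a1"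
  define K where "K = cball z (dist x0 z + 1)"
  have "0 < dist x0 z + 1" by (simp add: add_nonneg_pos)
  then have Kc: "compact K" "K \<noteq> {}" and x0K: "x0 \<in> K"
    unfolding K_def by (auto simp: dist_commute)
  obtain m where m: "\<forall>x\<in>K. ereal m \<le> f x"
    using proper_lsc_fun_bounded_below_on_compact[OF proper lsc Kc(1)] by blast
  define \<kappa> where "\<kappa> n = real n + (\<bar>a0 - m\<bar> + 1)" for n :: nat
  have kp: "0 < \<kappa> n" "a0 - m < \<kappa> n" for n unfolding \<kappa>_def by auto
  have "\<exists>y\<in>K. \<forall>x\<in>K. f y + ereal (\<kappa> n * norm (y - z)^2) \<le> f x + ereal (\<kappa> n * norm (x - z)^2)" for n
    by (rule lsc_fun_plus_continuous_attains_min[OF lsc Kc]) (intro continuous_intros)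
  then obtain y where yK: "\<And>n. y n \<in> K"
    and ymin: "\<And>n. \<forall>x\<in>K. f (y n) + ereal (\<kappa> n * norm (y n - z)^2) \<le> f x + ereal (\<kappa> n * norm (x - z)^2)"
    by metis
  have bound: "f (y n) \<le> ereal C \<and> \<kappa> n * norm (y n - z)^2 \<le> C - m" for n
  proof -
    have "f (y n) + ereal (\<kappa> n * norm (y n - z)^2) \<le> ereal (a0 + \<kappa> n * norm (x0 - z)^2)"
      using ymin[of n] x0K f0 by fastforce
    moreover have "ereal m \<le> f (y n)" using m yK by blast
    ultimately obtain r where r: "f (y n) = ereal r" "m \<le> r" by (cases "f (y n)") auto
    have "dist (y n) z < dist x0 z + 1"
      using proximal_minimizer_interior[OF yK[unfolded K_def] ymin[unfolded K_def] m[unfolded K_def]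
          _ f0 kp] by simp
    from proximal_minimizer_bound[OF subgrad ymin[unfolded K_def] this kp(1) r(1) f0 f1 t z_def]
    have "r + 2 * \<kappa> n * norm (y n - z)^2 \<le> C" unfolding C_def .
    moreover have "0 \<le> \<kappa> n * norm (y n - z)^2" using kp(1)[of n] by simp
    ultimately show ?thesis using r by simp
  qed
  have "filterlim \<kappa> at_top sequentially"
    unfolding \<kappa>_def
    by (subst add.commute) (rule filterlim_tendsto_add_at_top[OF tendsto_const filterlim_real_sequentially])
  with bound kp(1) have "y \<longlonglongrightarrow> z" by (intro tendsto_of_weighted_norm_sq_bounded) blast+
  then have "f z \<le> liminf (\<lambda>n. f (y n))" using lsc unfolding lsc_fun_def by blast
  also have "\<dots> \<le> ereal C" using bound by (intro Liminf_le always_eventually) simp_all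
  finally show ?thesis unfolding z_def C_def .
qed

lemma convex_fun_of_subgradient_inequality:
  fixes f :: "'a::euclidean_space \<Rightarrow> ereal"
  assumes proper: "proper_fun f" and lsc: "lsc_fun f"
    and subgrad: "\<And>y v x. v \<in> limiting_subdiff f y \<Longrightarrow> f y + ereal (v \<bullet> (x - y)) \<le> f x"
  shows "convex_fun f"
  unfolding convex_fun_def
proof (intro allI impI)
  fix x y :: 'a and t :: real assume t: "0 \<le> t \<and> t \<le> 1"
  have ninf: "f x \<noteq> -\<infinity>" "f y \<noteq> -\<infinity>" using proper unfolding proper_fun_def by auto
  show "f ((1 - t) *\<^sub>R x + t *\<^sub>R y) \<le> ereal (1 - t) * f x + ereal t * f y"
  proof (cases "t = 0 \<or> t = 1")
    case True
    then show ?thesis by (auto simp: zero_ereal_def[symmetric])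
  next
    case False
    with t have t01: "0 < t" "t < 1" by auto
    show ?thesis
    proof (cases "f x = \<infinity> \<or> f y = \<infinity>")
      case True
      with t01 ninf have "ereal (1 - t) * f x + ereal t * f y = \<infinity>"
        by (cases "f x"; cases "f y") auto
      then show ?thesis by (metis ereal_less_eq(1))
    next
      case False
      with ninf obtain a0 a1 where "f x = ereal a0" "f y = ereal a1"
        by (cases "f x"; cases "f y") auto
      with convex_combination_le_of_subgradient_inequality[OF proper lsc subgrad this] t
      show ?thesis by simp
    qed
  qed
qed

lemma a_strongly_convex_subgradient_inequality:
  assumes k: "kernel_ok phi dphi phis dphis" and a: "a_strongly_convex phi dphis f"
    and v: "v \<in> limiting_subdiff f y"
  shows "f y + ereal (v \<bullet> (x - y)) \<le> f x"
proof -
  define w where "w = dphis v"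
  have cv: "convex_on UNIV phi" and dg: "(phi has_derivative (\<lambda>h. dphi w \<bullet> h)) (at w)"
    using k unfolding kernel_ok_def legendre_full_def by auto
  have "dphi w = v" using k unfolding kernel_ok_def w_def by auto
  then have "v \<bullet> (x - y) \<le> phi (x - y + w) - phi w"
    using convex_on_UNIV_above_tangent[OF cv dg, of "x - y"] by (simp add: add.commute)
  then have "f y + ereal (v \<bullet> (x - y)) \<le> f y + ereal (phi (x - y + w) - phi w)"
    by (intro add_left_mono) simp
  also have "\<dots> \<le> f x"
    using a v unfolding a_strongly_convex_def w_def by blast
  finally show ?thesis .
qed

lemma a_strongly_convex_strictly_convex_on_dom_subdiff:
  assumes k: "kernel_ok phi dphi phis dphis" and a: "a_strongly_convex phi dphis f"
    and C: "convex C" "C \<subseteq> dom_subdiff f"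
  shows "strictly_convex_fun_on C f"
  unfolding strictly_convex_fun_on_def
proof (intro ballI allI impI)
  fix x y and t :: real assume xC: "x \<in> C" and yC: "y \<in> C" and xyt: "x \<noteq> y \<and> 0 < t \<and> t < 1"
  have proper: "proper_fun f" using a unfolding a_strongly_convex_def by simp
  have finite: "\<exists>r. f p = ereal r" if "p \<in> C" for p
  proof -
    obtain v where "v \<in> limiting_subdiff f p" using C(2) \<open>p \<in> C\<close> unfolding dom_subdiff_def by auto
    then show ?thesis
      using subgradient_inequality_imp_finite[OF proper a_strongly_convex_subgradient_inequality[OF k a]]
      by blast
  qed
  define z where "z = (1 - t) *\<^sub>R x + t *\<^sub>R y"
  have zC: "z \<in> C" using C(1) xC yC xyt unfolding z_def by (simp add: convex_alt)
  then obtain v where v: "v \<in> limiting_subdiff f z" using C(2) unfolding dom_subdiff_def by auto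
  obtain rz rx ry where rz: "f z = ereal rz" and rx: "f x = ereal rx" and ry: "f y = ereal ry"
    using finite xC yC zC by blast
  define w where "w = dphis v"
  have "f z + ereal (phi (x - z + w) - phi w) \<le> f x" "f z + ereal (phi (y - z + w) - phi w) \<le> f y"
    using a v unfolding a_strongly_convex_def w_def by blast+
  then have "(1 - t) * (rz + (phi (x - z + w) - phi w)) + t * (rz + (phi (y - z + w) - phi w))
        \<le> (1 - t) * rx + t * ry"
    using xyt rz rx ry by (intro add_mono mult_left_mono) auto
  moreover have "phi w < (1 - t) * phi (x - z + w) + t * phi (y - z + w)"
  proof -
    have "strictly_convex_real phi" using k unfolding kernel_ok_def legendre_full_def by auto
    moreover have "(1 - t) *\<^sub>R (x - z + w) + t *\<^sub>R (y - z + w) = w"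
      unfolding z_def by (simp add: algebra_simps)
    moreover have "x - z + w \<noteq> y - z + w" using xyt by simp
    ultimately show ?thesis using xyt unfolding strictly_convex_real_def by metis
  qed
  ultimately have "rz < (1 - t) * rx + t * ry" by (simp add: algebra_simps)
  then show "f ((1 - t) *\<^sub>R x + t *\<^sub>R y) < ereal (1 - t) * f x + ereal t * f y"
    using rz rx ry unfolding z_def by simp
qed

theorem mainTheorem10:
  fixes phi phis :: "'a::euclidean_space \<Rightarrow> real"
    and dphi dphis :: "'a \<Rightarrow> 'a"
    and f :: "'a \<Rightarrow> ereal"
  assumes "kernel_ok phi dphi phis dphis"
    and "a_strongly_convex phi dphis f"
  shows "essentially_strictly_convex f"
proof -
  have proper: "proper_fun f" and lsc: "lsc_fun f"
    using assms(2) unfolding a_strongly_convex_def by auto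
  have "convex_fun f"
    using convex_fun_of_subgradient_inequality[OF proper lsc]
      a_strongly_convex_subgradient_inequality[OF assms] by blast
  then show ?thesis
    unfolding essentially_strictly_convex_def
    using proper lsc a_strongly_convex_strictly_convex_on_dom_subdiff[OF assms] by blast
qed

end
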